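(* Let $(X,T)$ be a dynamical system with $\mathcal M_T(X)\neq\emptyset$. If $\mathcal M_T^e(X)$ is dense in $\mathcal M_T(X)$, then $T|_{C_M(T)}\colon C_M(T)\to C_M(T)$ is topologically transitive.
   Context: A dynamical system $(X,T)$ consists of a complete separable metric space $(X,\rho)$ and a continuous surjection $T\colon X\to X$. $\mathcal M_T(X)$ is the set of $T$-invariant Borel probability measures (weak$*$ topology), $\mathcal M_T^e(X)$ the ergodic ones. The measure center $C_M(T)$ is the complement of the union of all open sets $U$ with $\mu(U)=0$ for every $\mu\in\mathcal M_T(X)$; it is closed and $T$-invariant. A map $S\colon Y\to Y$ is topologically transitive if for every two nonempty open $U,V\subset Y$ there is $n>0$ with $U\cap S^{-n}V\ne\emptyset$. *)

theory Defs
  imports "HOL-Probability.Probability"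
begin

text \<open>A dynamical system: X is the whole type 'a (a Polish space, i.e. a complete
separable metric space), T a continuous surjection.\<close>

definition dyn_system :: "('a::polish_space \<Rightarrow> 'a) \<Rightarrow> bool" where
  "dyn_system T \<longleftrightarrow> continuous_on UNIV T \<and> surj T"

definition invariant_measures :: "('a::polish_space \<Rightarrow> 'a) \<Rightarrow> 'a measure set" where
  "invariant_measures T = {\<mu>. sets \<mu> = sets borel \<and> prob_space \<mu> \<and>
      (\<forall>A \<in> sets borel. emeasure \<mu> (T -` A) = emeasure \<mu> A)}"

definition ergodic_measures :: "('a::polish_space \<Rightarrow> 'a) \<Rightarrow> 'a measure set" where
  "ergodic_measures T = {\<mu> \<in> invariant_measures T.
      \<forall>A \<in> sets borel. T -` A = A \<longrightarrow> emeasure \<mu> A = 0 \<or> emeasure \<mu> A = 1}"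

definition bcont :: "('a::topological_space \<Rightarrow> real) \<Rightarrow> bool" where
  "bcont f \<longleftrightarrow> continuous_on UNIV f \<and> bounded (range f)"

text \<open>Density of a set N in a set M of probability measures for the weak* topology,
expressed via the standard neighbourhood base
{\<nu>. \<forall>i. |\<integral> f_i d\<nu> - \<integral> f_i d\<mu>| < \<epsilon>}, f_1..f_k bounded continuous.\<close>
definition weak_star_dense_in :: "'a::topological_space measure set \<Rightarrow> 'a measure set \<Rightarrow> bool" where
  "weak_star_dense_in N M \<longleftrightarrow>
     (\<forall>\<mu> \<in> M. \<forall>F :: ('a \<Rightarrow> real) set. \<forall>\<epsilon>::real.
        finite F \<longrightarrow> (\<forall>f \<in> F. bcont f) \<longrightarrow> \<epsilon> > 0 \<longrightarrow>
        (\<exists>\<nu> \<in> N. \<forall>f \<in> F. \<bar>integral\<^sup>L \<nu> f - integral\<^sup>L \<mu> f\<bar> < \<epsilon>))"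

definition measure_center :: "('a::polish_space \<Rightarrow> 'a) \<Rightarrow> 'a set" where
  "measure_center T = - \<Union>{U. open U \<and> (\<forall>\<mu> \<in> invariant_measures T. emeasure \<mu> U = 0)}"

definition top_transitive_on :: "'a::topological_space set \<Rightarrow> ('a \<Rightarrow> 'a) \<Rightarrow> bool" where
  "top_transitive_on Y S \<longleftrightarrow>
     (\<forall>U V. openin (top_of_set Y) U \<longrightarrow> openin (top_of_set Y) V \<longrightarrow> U \<noteq> {} \<longrightarrow> V \<noteq> {} \<longrightarrow>
        (\<exists>n>0. \<exists>x \<in> U. (S ^^ n) x \<in> V))"

end

theory Submission
  imports Defs
begin

(* Let U, V be nonempty relatively open subsets of the measure center C,
   U = C \<inter> U', V = C \<inter> V' with U', V' open.  Since U' and V' meet C, some invariant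
   measures \<mu>, \<nu> give them positive mass, so their midpoint m charges both.  Positivity
   of the mass of an open set is detected by the integral of a continuous bump function,
   hence is a weak*-open condition; by density some ergodic \<rho> charges both U' and V'.
   For an ergodic \<rho> the set of points visiting V' infinitely often is T-invariant and
   has measure at least \<rho>(V') > 0, hence full measure; also \<rho>-almost every orbit stays
   in C, since the complement of C is a \<rho>-null open set.  A typical point of U' then
   gives a point of U whose orbit enters V. *)

lemma invariant_measuresD:
  assumes "\<mu> \<in> invariant_measures T"
  shows "sets \<mu> = sets borel" "prob_space \<mu>" "space \<mu> = UNIV"
  using assms sets_eq_imp_space_eq[of \<mu> borel]
  by (auto simp: invariant_measures_def)

lemma ergodic_measures_invariant: "\<rho> \<in> ergodic_measures T \<Longrightarrow> \<rho> \<in> invariant_measures T"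
  by (simp add: ergodic_measures_def)

lemma borel_measurable_funpow:
  fixes T :: "'a::topological_space \<Rightarrow> 'a"
  assumes "continuous_on UNIV T"
  shows "T ^^ n \<in> borel \<rightarrow>\<^sub>M borel"
  using assms by (intro measurable_compose_n borel_measurable_continuous_onI)

lemma borel_vimage_funpow:
  fixes T :: "'a::topological_space \<Rightarrow> 'a"
  assumes "continuous_on UNIV T" and "A \<in> sets borel"
  shows "(T ^^ n) -` A \<in> sets borel"
  using measurable_sets_borel[OF borel_measurable_funpow[OF assms(1)] assms(2)] by simp

lemma invariant_measure_funpow:
  fixes T :: "'a::polish_space \<Rightarrow> 'a"
  assumes cT: "continuous_on UNIV T" and \<mu>: "\<mu> \<in> invariant_measures T"
    and A: "A \<in> sets borel"
  shows "emeasure \<mu> ((T ^^ n) -` A) = emeasure \<mu> A"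
proof (induction n)
  case (Suc n)
  have "(T ^^ Suc n) -` A = T -` ((T ^^ n) -` A)"
    by (metis funpow_Suc_right vimage_comp)
  then have "emeasure \<mu> ((T ^^ Suc n) -` A) = emeasure \<mu> ((T ^^ n) -` A)"
    using \<mu> borel_vimage_funpow[OF cT A] by (simp add: invariant_measures_def)
  then show ?case using Suc.IH by (rule trans)
qed simp

lemma invariant_midpoint:
  fixes T :: "'a::polish_space \<Rightarrow> 'a"
  assumes cT: "continuous_on UNIV T"
    and \<mu>: "\<mu> \<in> invariant_measures T" and \<nu>: "\<nu> \<in> invariant_measures T"
  shows "\<exists>m \<in> invariant_measures T. \<forall>A \<in> sets borel.
           emeasure m A = (emeasure \<mu> A + emeasure \<nu> A) / 2"
proof -
  define f where "f A = (emeasure \<mu> A + emeasure \<nu> A) / 2" for A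
  define m where "m = measure_of UNIV (sets borel) f"
  note \<mu>D = invariant_measuresD[OF \<mu>] and \<nu>D = invariant_measuresD[OF \<nu>]
  have ca: "countably_additive (sets borel) f"
    unfolding countably_additive_def
  proof (intro allI impI)
    fix A :: "nat \<Rightarrow> 'a set"
    assume A: "range A \<subseteq> sets borel" "disjoint_family A"
    have "(\<Sum>i. f (A i)) = ((\<Sum>i. emeasure \<mu> (A i)) + (\<Sum>i. emeasure \<nu> (A i))) / 2"
      unfolding f_def ennreal_suminf_divide by (subst suminf_add) auto
    also have "\<dots> = f (\<Union>(range A))"
      unfolding f_def using A by (simp add: suminf_emeasure \<mu>D(1) \<nu>D(1))
    finally show "(\<Sum>i. f (A i)) = f (\<Union>(range A))" .
  qed
  have em: "emeasure m A = f A" if "A \<in> sets borel" for A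
    unfolding m_def
    by (rule emeasure_measure_of_sigma[OF _ _ ca that])
       (auto simp: positive_def f_def intro: sets.sigma_algebra_axioms[of borel, simplified])
  have sm: "sets m = sets borel" and spm: "space m = UNIV"
    unfolding m_def by (metis sets.sets_measure_of_eq space_borel, simp)
  have "prob_space m"
  proof
    have "emeasure m UNIV = f UNIV" by (rule em) simp
    then show "emeasure m (space m) = 1"
      using prob_space.emeasure_space_1[OF \<mu>D(2)] prob_space.emeasure_space_1[OF \<nu>D(2)]
      by (simp add: f_def spm \<mu>D(3) \<nu>D(3))
  qed
  moreover have "emeasure m (T -` A) = emeasure m A" if A: "A \<in> sets borel" for A
    using em[OF A] em[OF borel_vimage_funpow[OF cT A, of 1]] \<mu> \<nu> A
    by (simp add: f_def invariant_measures_def)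
  ultimately have "m \<in> invariant_measures T"
    using sm by (simp add: invariant_measures_def)
  then show ?thesis using em unfolding f_def by blast
qed

section \<open>Positive mass on open sets is a weak*-open condition\<close>

lemma open_bump_function:
  fixes U :: "'a::metric_space set"
  assumes "open U"
  shows "\<exists>f. bcont f \<and> (\<forall>x. 0 \<le> f x \<and> f x \<le> 1) \<and> (\<forall>x. f x \<noteq> 0 \<longleftrightarrow> x \<in> U)"
proof (cases "U = UNIV")
  case True
  then show ?thesis
    by (intro exI[of _ "\<lambda>x. 1"]) (auto simp: bcont_def)
next
  case False
  define f where "f x = min 1 (infdist x (- U))" for x
  have "continuous_on UNIV f"
    unfolding f_def by (intro continuous_intros)
  moreover have "range f \<subseteq> {0..1}"
    by (auto simp: f_def infdist_nonneg)
  then have "bounded (range f)"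
    by (metis bounded_closed_interval bounded_subset)
  moreover have "f x \<noteq> 0 \<longleftrightarrow> x \<in> U" for x
  proof (cases "x \<in> U")
    case True
    then have "infdist x (- U) > 0"
      using False assms by (intro infdist_pos_not_in_closed) auto
    then show ?thesis using True by (simp add: f_def)
  qed (simp add: f_def)
  ultimately show ?thesis
    by (intro exI[of _ f]) (auto simp: bcont_def f_def infdist_nonneg)
qed

lemma integral_bump_pos_iff:
  fixes \<mu> :: "'a::polish_space measure"
  assumes s: "sets \<mu> = sets borel" and p: "prob_space \<mu>"
    and f: "bcont f" "\<forall>x. 0 \<le> f x \<and> f x \<le> 1" "\<forall>x. f x \<noteq> 0 \<longleftrightarrow> x \<in> U"
    and U: "open U"
  shows "integral\<^sup>L \<mu> f > 0 \<longleftrightarrow> emeasure \<mu> U > 0"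
proof -
  interpret prob_space \<mu> by fact
  have sp: "space \<mu> = UNIV" using s by (metis sets_eq_imp_space_eq space_borel)
  have fm: "f \<in> borel_measurable \<mu>"
    using borel_measurable_continuous_onI[of f] f(1) measurable_cong_sets[OF s refl]
    by (auto simp: bcont_def)
  have int: "integrable \<mu> f"
    by (rule integrable_const_bound[where B=1]) (use f fm in auto)
  have f0: "f x = 0 \<longleftrightarrow> x \<notin> U" for x
    using f(3) by blast
  have "integral\<^sup>L \<mu> f > 0 \<longleftrightarrow> integral\<^sup>L \<mu> f \<noteq> 0"
    using f by (simp add: integral_nonneg_AE order_less_le)
  also have "\<dots> \<longleftrightarrow> \<not> (AE x in \<mu>. x \<notin> U)"
    using integral_nonneg_eq_0_iff_AE[OF int] f by (simp add: f0)
  also have "\<dots> \<longleftrightarrow> emeasure \<mu> U \<noteq> 0"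
    using U s by (subst AE_iff_measurable[of U \<mu> "\<lambda>x. x \<notin> U"]) (auto simp: sp)
  finally show ?thesis by (simp add: zero_less_iff_neq_zero)
qed

lemma ergodic_charging_two_open_sets:
  fixes T :: "'a::polish_space \<Rightarrow> 'a"
  assumes dense: "weak_star_dense_in (ergodic_measures T) (invariant_measures T)"
    and m: "m \<in> invariant_measures T"
    and U: "open U" "emeasure m U > 0" and V: "open V" "emeasure m V > 0"
  shows "\<exists>\<rho> \<in> ergodic_measures T. emeasure \<rho> U > 0 \<and> emeasure \<rho> V > 0"
proof -
  obtain f where f: "bcont f" "\<forall>x. 0 \<le> f x \<and> f x \<le> 1" "\<forall>x. f x \<noteq> 0 \<longleftrightarrow> x \<in> U"
    using open_bump_function[OF U(1)] by blast
  obtain g where g: "bcont g" "\<forall>x. 0 \<le> g x \<and> g x \<le> 1" "\<forall>x. g x \<noteq> 0 \<longleftrightarrow> x \<in> V"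
    using open_bump_function[OF V(1)] by blast
  note mD = invariant_measuresD[OF m]
  define \<epsilon> where "\<epsilon> = min (integral\<^sup>L m f) (integral\<^sup>L m g)"
  have "\<epsilon> > 0"
    using integral_bump_pos_iff[OF mD(1,2) f U(1)] integral_bump_pos_iff[OF mD(1,2) g V(1)] U V
    by (simp add: \<epsilon>_def)
  then obtain \<rho> where \<rho>: "\<rho> \<in> ergodic_measures T"
    and close: "\<forall>h \<in> {f, g}. \<bar>integral\<^sup>L \<rho> h - integral\<^sup>L m h\<bar> < \<epsilon>"
    using dense[unfolded weak_star_dense_in_def, rule_format, OF m, of "{f, g}" \<epsilon>] f(1) g(1)
    by auto
  have "integral\<^sup>L \<rho> f > 0" "integral\<^sup>L \<rho> g > 0"
    using close unfolding \<epsilon>_def by auto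
  moreover note \<rho>D = invariant_measuresD[OF ergodic_measures_invariant[OF \<rho>]]
  ultimately show ?thesis
    using \<rho> integral_bump_pos_iff[OF \<rho>D(1,2) f U(1)] integral_bump_pos_iff[OF \<rho>D(1,2) g V(1)]
    by blast
qed

lemma open_compl_measure_center: "open (- measure_center T)"
  unfolding measure_center_def by (auto intro: open_Union)

text \<open>By the Lindelof property the complement of the measure center is a countable union
  of universally null open sets, hence null for every invariant measure.\<close>

lemma measure_center_compl_null:
  fixes T :: "'a::polish_space \<Rightarrow> 'a"
  assumes \<rho>: "\<rho> \<in> invariant_measures T"
  shows "- measure_center T \<in> null_sets \<rho>"
proof -
  define F where "F = {U. open U \<and> (\<forall>\<mu> \<in> invariant_measures T. emeasure \<mu> U = 0)}"
  obtain F' where F': "F' \<subseteq> F" "countable F'" "\<Union>F' = \<Union>F"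
    using Lindelof[of F] unfolding F_def by blast
  have "\<Union>F' \<in> null_sets \<rho>"
    using F' \<rho> invariant_measuresD(1)[OF \<rho>]
    by (intro null_sets_UN'[OF F'(2), of "\<lambda>U. U", simplified]) (auto simp: F_def null_sets_def)
  then show ?thesis
    using F'(3) by (simp add: measure_center_def F_def)
qed

lemma measure_center_open_charged:
  fixes T :: "'a::polish_space \<Rightarrow> 'a"
  assumes "open W" "measure_center T \<inter> W \<noteq> {}"
  shows "\<exists>\<mu> \<in> invariant_measures T. emeasure \<mu> W > 0"
  using assms unfolding measure_center_def by (auto simp: zero_less_iff_neq_zero)

lemma AE_orbit_in_measure_center:
  fixes T :: "'a::polish_space \<Rightarrow> 'a"
  assumes cT: "continuous_on UNIV T" and \<rho>: "\<rho> \<in> invariant_measures T"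
  shows "AE x in \<rho>. \<forall>n. (T ^^ n) x \<in> measure_center T"
proof (subst AE_all_countable, intro allI)
  fix n
  let ?N = "- measure_center T"
  have N: "?N \<in> sets borel" using open_compl_measure_center by (rule borel_open)
  have "emeasure \<rho> ((T ^^ n) -` ?N) = 0"
    using invariant_measure_funpow[OF cT \<rho> N] null_setsD1[OF measure_center_compl_null[OF \<rho>]]
    by simp
  then have "(T ^^ n) -` ?N \<in> null_sets \<rho>"
    using borel_vimage_funpow[OF cT N] invariant_measuresD(1)[OF \<rho>] by (simp add: null_sets_def)
  then show "AE x in \<rho>. (T ^^ n) x \<in> measure_center T"
    by (rule AE_I') blast
qed

section \<open>Recurrence for ergodic measures\<close>

lemma vimage_limsup_visits:
  "T -` limsup (\<lambda>n. (T ^^ n) -` V) = limsup (\<lambda>n. (T ^^ n) -` V)"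
proof -
  have "T x \<in> limsup (\<lambda>n. (T ^^ n) -` V) \<longleftrightarrow> x \<in> limsup (\<lambda>n. (T ^^ n) -` V)" for x
    using eventually_sequentially_Suc[of "\<lambda>n. (T ^^ n) x \<notin> V"]
    by (simp add: mem_limsup_iff frequently_def funpow_swap1)
  then show ?thesis by auto
qed

lemma emeasure_limsup_visits:
  fixes T :: "'a::polish_space \<Rightarrow> 'a"
  assumes cT: "continuous_on UNIV T" and \<rho>: "\<rho> \<in> invariant_measures T"
    and V: "V \<in> sets borel"
  shows "emeasure \<rho> V \<le> emeasure \<rho> (limsup (\<lambda>n. (T ^^ n) -` V))"
proof -
  note \<rho>D = invariant_measuresD[OF \<rho>]
  interpret prob_space \<rho> by (fact \<rho>D(2))
  define B where "B k = (\<Union>n\<in>{k..}. (T ^^ n) -` V)" for k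
  have Bb: "B k \<in> sets \<rho>" for k
    unfolding B_def \<rho>D(1) using borel_vimage_funpow[OF cT V] by (intro sets.countable_UN') auto
  have "decseq B"
    unfolding decseq_def B_def by auto (meson atLeast_iff order_trans)
  have "emeasure \<rho> V \<le> emeasure \<rho> (B k)" for k
  proof -
    have "emeasure \<rho> V = emeasure \<rho> ((T ^^ k) -` V)"
      using invariant_measure_funpow[OF cT \<rho> V] by simp
    also have "\<dots> \<le> emeasure \<rho> (B k)"
      using Bb by (intro emeasure_mono) (auto simp: B_def)
    finally show ?thesis .
  qed
  then have "emeasure \<rho> V \<le> (INF k. emeasure \<rho> (B k))"
    by (simp add: le_INF_iff)
  also have "\<dots> = emeasure \<rho> (\<Inter>k. B k)"
    using Bb \<open>decseq B\<close> by (intro INF_emeasure_decseq) auto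
  finally show ?thesis
    by (simp add: limsup_INF_SUP B_def)
qed

lemma ergodic_AE_visits_often:
  fixes T :: "'a::polish_space \<Rightarrow> 'a"
  assumes cT: "continuous_on UNIV T" and \<rho>: "\<rho> \<in> ergodic_measures T"
    and V: "V \<in> sets borel" "emeasure \<rho> V > 0"
  shows "AE x in \<rho>. \<exists>\<^sub>F n in sequentially. (T ^^ n) x \<in> V"
proof -
  let ?R = "limsup (\<lambda>n. (T ^^ n) -` V)"
  have inv: "\<rho> \<in> invariant_measures T" using \<rho> by (rule ergodic_measures_invariant)
  note \<rho>D = invariant_measuresD[OF inv]
  interpret prob_space \<rho> by (fact \<rho>D(2))
  have Rb: "?R \<in> sets borel"
    using borel_vimage_funpow[OF cT V(1)] by (intro measurable_limsup)
  have "emeasure \<rho> ?R \<noteq> 0"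
    using emeasure_limsup_visits[OF cT inv V(1)] V(2) by auto
  then have "emeasure \<rho> ?R = 1"
    using \<rho> Rb vimage_limsup_visits[of T V] by (auto simp: ergodic_measures_def)
  then have "AE x in \<rho>. x \<in> ?R"
    using AE_in_set_eq_1[of ?R] Rb \<rho>D(1) by (simp add: emeasure_eq_measure)
  then show ?thesis by (simp add: mem_limsup_iff)
qed

lemma ergodic_return:
  fixes T :: "'a::polish_space \<Rightarrow> 'a"
  assumes cT: "continuous_on UNIV T" and \<rho>: "\<rho> \<in> ergodic_measures T"
    and U: "open U" "emeasure \<rho> U > 0" and V: "open V" "emeasure \<rho> V > 0"
  shows "\<exists>n>0. \<exists>x \<in> U \<inter> measure_center T. (T ^^ n) x \<in> V \<inter> measure_center T"
proof (rule ccontr)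
  let ?C = "measure_center T"
  assume no_return: "\<not> ?thesis"
  have inv: "\<rho> \<in> invariant_measures T" using \<rho> by (rule ergodic_measures_invariant)
  have "AE x in \<rho>. (\<exists>\<^sub>F n in sequentially. (T ^^ n) x \<in> V) \<and> (\<forall>n. (T ^^ n) x \<in> ?C)"
    using ergodic_AE_visits_often[OF cT \<rho> borel_open[OF V(1)] V(2)]
      AE_orbit_in_measure_center[OF cT inv] by (rule AE_conjI)
  then have "AE x in \<rho>. x \<notin> U"
  proof eventually_elim
    case (elim x)
    then have orbit: "\<forall>n. (T ^^ n) x \<in> ?C" by blast
    obtain n where n: "n \<ge> 1" "(T ^^ n) x \<in> V"
      using frequently_sequentially[THEN iffD1, rule_format, OF elim[THEN conjunct1], of 1] by blast
    then have "\<not> (x \<in> U \<inter> ?C \<and> (T ^^ n) x \<in> V \<inter> ?C)"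
      using no_return gr0I[of n] by (metis not_one_le_zero)
    moreover have "x \<in> ?C" "(T ^^ n) x \<in> ?C"
      using orbit[rule_format, of 0] orbit by auto
    ultimately show "x \<notin> U"
      using n(2) by blast
  qed
  then show False
    using U AE_iff_measurable[of U \<rho> "\<lambda>x. x \<notin> U"] invariant_measuresD(1,3)[OF inv] by simp
qed

theorem proposition7p2:
  fixes T :: "'a::polish_space \<Rightarrow> 'a"
  assumes "dyn_system T"
    and "invariant_measures T \<noteq> {}"
    and "weak_star_dense_in (ergodic_measures T) (invariant_measures T)"
  shows "top_transitive_on (measure_center T) T"
  unfolding top_transitive_on_def
proof (intro allI impI)
  let ?C = "measure_center T"
  have cT: "continuous_on UNIV T" using assms(1) by (simp add: dyn_system_def)
  fix U V
  assume "openin (top_of_set ?C) U" "openin (top_of_set ?C) V" "U \<noteq> {}" "V \<noteq> {}"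
  then obtain U' V' where U': "open U'" "U = ?C \<inter> U'" and V': "open V'" "V = ?C \<inter> V'"
    by (auto simp: openin_open)
  obtain \<mu> where \<mu>: "\<mu> \<in> invariant_measures T" "emeasure \<mu> U' > 0"
    using measure_center_open_charged[OF U'(1)] U'(2) \<open>U \<noteq> {}\<close> by blast
  obtain \<nu> where \<nu>: "\<nu> \<in> invariant_measures T" "emeasure \<nu> V' > 0"
    using measure_center_open_charged[OF V'(1)] V'(2) \<open>V \<noteq> {}\<close> by blast
  obtain m where m: "m \<in> invariant_measures T"
    "\<forall>A \<in> sets borel. emeasure m A = (emeasure \<mu> A + emeasure \<nu> A) / 2"
    using invariant_midpoint[OF cT \<mu>(1) \<nu>(1)] by blast
  have "emeasure m U' > 0" "emeasure m V' > 0"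
    using m(2) U'(1) V'(1) \<mu>(2) \<nu>(2)
    by (simp_all add: ennreal_zero_less_divide add_pos_nonneg add_nonneg_pos)
  then obtain \<rho> where "\<rho> \<in> ergodic_measures T" "emeasure \<rho> U' > 0" "emeasure \<rho> V' > 0"
    using ergodic_charging_two_open_sets[OF assms(3) m(1) U'(1) _ V'(1)] by blast
  then show "\<exists>n>0. \<exists>x\<in>U. (T ^^ n) x \<in> V"
    using ergodic_return[OF cT _ U'(1) _ V'(1)] U'(2) V'(2) by blast
qed

end
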